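(* Let $n\in\mathbb{N}$. Then $R_{\mathcal{S}^*_{Ne,n}}(\mathcal{W}_n)=\left(\dfrac{2}{3n+\sqrt{9n^2+4}}\right)^{1/n}$, and this radius is sharp, attained by $f(z)=z(1+z^n)/(1-z^n)$.
   Context: $\mathbb{D}=\{|z|<1\}$, $\mathbb{D}_r=\{|z|<r\}$. For $n\in\mathbb{N}$, $\mathcal{A}_n$ is the class of analytic functions on $\mathbb{D}$ of the form $f(z)=z+\sum_{k\ge n+1}a_kz^k$; for such $f$ let $\mathcal{Q}_f(z)=zf'(z)/f(z)$. $\mathcal{P}_n$ is the class of analytic $p(z)=1+\sum_{k\ge n}p_kz^k$ on $\mathbb{D}$ with $\mathrm{Re}\,p(z)>0$. $\mathcal{W}_n=\{f\in\mathcal{A}_n: f(z)/z\in\mathcal{P}_n\}$. Let $\varphi_{Ne}(z)=1+z-z^3/3$ (univalent on $\mathbb{D}$), $\Omega_{Ne}=\varphi_{Ne}(\mathbb{D})$, $\mathcal{S}^*_{Ne}$ the set of $f$ ($f(0)=0,f'(0)=1$) with $\mathcal{Q}_f\prec\varphi_{Ne}$ (i.e. $\mathcal{Q}_f=\varphi_{Ne}\circ w$, $w:\mathbb{D}\to\mathbb{D}$ analytic, $w(0)=0$), $\mathcal{S}^*_{Ne,n}=\mathcal{S}^*_{Ne}\cap\mathcal{A}_n$. For $\mathcal{G}\subset\mathcal{A}_n$, $R_{\mathcal{S}^*_{Ne,n}}(\mathcal{G})$ is the largest $\rho\in(0,1]$ such that $\mathcal{Q}_f(\mathbb{D}_\rho)\subseteq\Omega_{Ne}$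 for all $f\in\mathcal{G}$. Sharpness means the stated $f$ lies in $\mathcal{W}_n$ and $\mathcal{Q}_f(\partial\mathbb{D}_\rho)\cap\partial\Omega_{Ne}\ne\emptyset$. *)

theory Defs
  imports "HOL-Analysis.Analysis"
begin

definition A_class :: "nat \<Rightarrow> (complex \<Rightarrow> complex) set" where
  "A_class n = {f. f holomorphic_on ball 0 1 \<and> f 0 = 0 \<and> deriv f 0 = 1 \<and>
                   (\<forall>k. 2 \<le> k \<and> k \<le> n \<longrightarrow> (deriv ^^ k) f 0 = 0)}"

definition P_class :: "nat \<Rightarrow> (complex \<Rightarrow> complex) set" where
  "P_class n = {p. p holomorphic_on ball 0 1 \<and> p 0 = 1 \<and>
                   (\<forall>k. 1 \<le> k \<and> k < n \<longrightarrow> (deriv ^^ k) p 0 = 0) \<and>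
                   (\<forall>z\<in>ball 0 1. Re (p z) > 0)}"

text \<open>W_n = {f in A_n : f(z)/z in P_n}; the function f(z)/z is meant with its removable
  singularity at 0 filled in, i.e. f(z) = z p(z) for some p in P_n.\<close>
definition W_class :: "nat \<Rightarrow> (complex \<Rightarrow> complex) set" where
  "W_class n = {f. f \<in> A_class n \<and> (\<exists>p\<in>P_class n. \<forall>z\<in>ball 0 1. f z = z * p z)}"

text \<open>Q_f(z) = z f'(z)/f(z), with its removable singularity at 0 filled by the value 1.\<close>
definition Qf :: "(complex \<Rightarrow> complex) \<Rightarrow> complex \<Rightarrow> complex" where
  "Qf f z = (if z = 0 then 1 else z * deriv f z / f z)"

definition phiNe :: "complex \<Rightarrow> complex" where
  "phiNe z = 1 + z - z ^ 3 / 3"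

definition OmegaNe :: "complex set" where
  "OmegaNe = phiNe ` ball 0 1"

definition radius_SNe :: "(complex \<Rightarrow> complex) set \<Rightarrow> real \<Rightarrow> bool" where
  "radius_SNe G \<rho> \<longleftrightarrow>
     (let S = {r. 0 < r \<and> r \<le> 1 \<and> (\<forall>f\<in>G. Qf f ` ball 0 r \<subseteq> OmegaNe)}
      in \<rho> \<in> S \<and> (\<forall>r\<in>S. r \<le> \<rho>))"

end

theory Submission
  imports Defs "HOL-Complex_Analysis.Complex_Analysis"
begin

text \<open>For \<open>f(z) = z p(z)\<close> with \<open>p \<in> P_n\<close> one has \<open>Q_f = 1 + z p'/p\<close>. The Cayley transform
  \<open>(p - 1)/(p + 1)\<close> maps the disc into itself and vanishes to order \<open>n\<close> at \<open>0\<close>, so it equals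
  \<open>z\<^sup>n \<phi>(z)\<close> with \<open>|\<phi>| \<le> 1\<close>; the Schwarz--Pick lemma for \<open>\<phi>\<close> then yields the sharp bound
  \<open>|z p'/p| \<le> 2 n r\<^sup>n / (1 - r\<^sup>2\<^sup>n)\<close> on \<open>|z| = r\<close>. Since \<open>\<Omega>_Ne\<close> contains the disc \<open>|w - 1| < 2/3\<close>,
  \<open>Q_f(\<bbbD>\<^sub>r) \<subseteq> \<Omega>_Ne\<close> as soon as \<open>2 n r\<^sup>n / (1 - r\<^sup>2\<^sup>n) < 2/3\<close>, i.e. \<open>r\<^sup>n < a\<close> for the positive
  root \<open>a = \<rho>\<^sup>n\<close> of \<open>a\<^sup>2 + 3 n a = 1\<close>. For the extremal function \<open>z (1 + z\<^sup>n)/(1 - z\<^sup>n)\<close>,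
  \<open>Q_f = 1 + 2 n z\<^sup>n / (1 - z\<^sup>2\<^sup>n)\<close> is real on the ray \<open>arg z = \<pi>/n\<close>, equal to \<open>1/3 = \<phi>_Ne(-1)\<close>
  at \<open>|z| = \<rho>\<close> and smaller beyond, while \<open>\<Omega>_Ne\<close> meets the real axis only to the right of \<open>1/3\<close>.\<close>

section \<open>The region \<open>\<Omega>_Ne\<close>\<close>

lemma ball_subset_OmegaNe: "ball 1 (2/3) \<subseteq> OmegaNe"
proof
  fix w :: complex
  assume "w \<in> ball 1 (2/3)"
  then have c: "norm (w - 1) < 2/3"
    by (simp add: dist_norm norm_minus_commute)
  define e where "e = min (1/2) (2/3 - norm (w - 1))"
  define r where "r = 1 - e"
  have e: "0 < e" "e \<le> 1/2" "e \<le> 2/3 - norm (w - 1)"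
    using c unfolding e_def by linarith+
  have r: "0 < r" "r < 1"
    using e by (auto simp: r_def)
  have "e^2 \<le> e"
    using e by (simp add: power2_eq_square mult_left_le)
  moreover have "r - r^3/3 = 2/3 - e^2 + e^3/3"
    unfolding r_def by (simp add: power2_eq_square power3_eq_cube field_simps)
  moreover have "0 \<le> e^3"
    using e by simp
  ultimately have radius: "norm (w - 1) + r^3/3 \<le> r"
    using e by linarith
  \<comment> \<open>\<open>phiNe z = w\<close> says that \<open>z\<close> is a fixed point of \<open>T\<close>, and \<open>T\<close> maps \<open>cball 0 r\<close> into itself.\<close>
  define T where "T = (\<lambda>z::complex. (w - 1) + z^3/3)"
  have "continuous_on (cball 0 r) T"
    unfolding T_def by (intro continuous_intros) auto
  moreover have "T \<in> cball 0 r \<rightarrow> cball 0 r"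
  proof
    fix z :: complex
    assume "z \<in> cball 0 r"
    then have "norm z ^ 3 \<le> r ^ 3"
      by (simp add: power_mono)
    moreover have "norm (T z) \<le> norm (w - 1) + norm z ^ 3 / 3"
      unfolding T_def using norm_triangle_ineq[of "w - 1" "z^3/3"]
      by (simp add: norm_divide norm_power)
    ultimately show "T z \<in> cball 0 r"
      using radius by simp
  qed
  ultimately obtain z where z: "z \<in> cball 0 r" "T z = z"
    using brouwer_ball[OF r(1)] by blast
  then have "norm z < 1" "phiNe z = w"
    using r unfolding T_def phiNe_def by (auto simp: algebra_simps)
  then show "w \<in> OmegaNe"
    unfolding OmegaNe_def by force
qed

lemma of_real_notin_OmegaNe:
  assumes "x \<le> 1/3"
  shows "complex_of_real x \<notin> OmegaNe"
proof
  assume "complex_of_real x \<in> OmegaNe"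
  then obtain z where z: "norm z < 1" "phiNe z = complex_of_real x"
    unfolding OmegaNe_def by auto
  obtain a b where ab: "z = Complex a b"
    by (cases z)
  have a1: "a^2 < 1"
  proof -
    have "a^2 \<le> a^2 + b^2" by simp
    also have "a^2 + b^2 = norm z ^ 2" by (simp add: ab cmod_power2)
    also have "\<dots> < 1" using z(1) by (simp add: power_less_one_iff abs_less_iff)
    finally show ?thesis .
  qed
  have "Im (phiNe z) = b * (1 - a^2 + b^2/3)"
    by (simp add: phiNe_def ab power2_eq_square power3_eq_cube field_simps)
  moreover have "1 - a^2 + b^2/3 > 0"
    using a1 by (simp add: add_pos_nonneg)
  ultimately have "b = 0"
    using z(2) by simp
  then have "Re (phiNe z) = 1 + a - a^3/3"
    by (simp add: phiNe_def ab power2_eq_square power3_eq_cube algebra_simps)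
  then have "1 + a - a^3/3 = x"
    using z(2) by simp
  moreover have "-1 < a" "a < 1"
    using a1 by (auto simp: abs_square_less_1)
  then have "(a + 1)^2 * (2 - a) / 3 > 0"
    by (intro divide_pos_pos mult_pos_pos) auto
  moreover have "1 + a - a^3/3 - 1/3 = (a + 1)^2 * (2 - a) / 3"
    by (simp add: power2_eq_square power3_eq_cube field_simps)
  ultimately show False
    using assms by linarith
qed

lemma one_third_in_frontier_OmegaNe: "complex_of_real (1/3) \<in> frontier OmegaNe"
proof -
  have "continuous_on (closure (ball (0::complex) 1)) phiNe"
    unfolding phiNe_def by (intro continuous_intros) auto
  then have "phiNe ` closure (ball 0 1) \<subseteq> closure OmegaNe"
    by (rule image_closure_subset[OF _ closed_closure])
       (auto simp: OmegaNe_def intro: closure_subset[THEN subsetD])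
  moreover have "phiNe (-1) = complex_of_real (1/3)"
    by (simp add: phiNe_def)
  ultimately have "complex_of_real (1/3) \<in> closure OmegaNe"
    by (metis closure_ball image_eqI mem_cball_0 norm_minus_cancel norm_one order_refl
        subsetD zero_less_one)
  moreover have "complex_of_real (1/3) \<notin> interior OmegaNe"
    using of_real_notin_OmegaNe[of "1/3"] interior_subset by auto
  ultimately show ?thesis
    by (simp add: frontier_def)
qed

section \<open>Vanishing Taylor coefficients at the origin\<close>

lemma higher_deriv_cong_ball:
  assumes "0 < r" "\<And>z. z \<in> ball 0 r \<Longrightarrow> f z = g z"
  shows "(deriv ^^ k) f 0 = (deriv ^^ k) g (0::complex)"
proof (rule higher_deriv_cong_ev[OF _ refl])
  have "eventually (\<lambda>z. z \<in> ball (0::complex) r) (nhds 0)"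
    using assms(1) by (intro eventually_nhds_in_open) auto
  then show "eventually (\<lambda>z. f z = g z) (nhds 0)"
    by eventually_elim (use assms(2) in auto)
qed

lemma higher_deriv_add_power_mult:
  fixes g h :: "complex \<Rightarrow> complex"
  assumes "g holomorphic_on S" "h holomorphic_on S" "open S" "0 \<in> S" "k < m"
  shows "(deriv ^^ k) (\<lambda>z. g z + z ^ m * h z) 0 = (deriv ^^ k) g 0"
proof -
  have "(deriv ^^ k) (\<lambda>z. z ^ m * h z) 0 =
      (\<Sum>i = 0..k. of_nat (k choose i) * (deriv ^^ i) (\<lambda>z. z ^ m) 0 * (deriv ^^ (k - i)) h 0)"
    by (rule higher_deriv_mult[OF _ assms(2-4)]) (intro holomorphic_intros)
  also have "\<dots> = 0"
  proof (intro sum.neutral ballI)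
    fix i
    assume "i \<in> {0..k}"
    then have "(deriv ^^ i) (\<lambda>z. z ^ m) 0 = 0"
      using assms(5) higher_deriv_power[of i 0 m 0] by (simp add: zero_power)
    then show "of_nat (k choose i) * (deriv ^^ i) (\<lambda>z. z ^ m) 0 * (deriv ^^ (k - i)) h 0 = 0"
      by (metis mult_eq_0_iff)
  qed
  finally have "(deriv ^^ k) (\<lambda>z. z ^ m * h z) 0 = 0" .
  moreover have "(deriv ^^ k) (\<lambda>z. g z + z ^ m * h z) 0 =
      (deriv ^^ k) g 0 + (deriv ^^ k) (\<lambda>z. z ^ m * h z) 0"
    by (rule higher_deriv_add[OF assms(1) _ assms(3,4)]) (intro holomorphic_intros assms(2))
  ultimately show ?thesis
    by simp
qed

lemma holomorphic_factor_power:
  fixes g :: "complex \<Rightarrow> complex"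
  assumes "g holomorphic_on ball 0 1" "\<And>k. k < m \<Longrightarrow> (deriv ^^ k) g 0 = 0"
  shows "\<exists>h. h holomorphic_on ball 0 1 \<and> (\<forall>z\<in>ball 0 1. g z = z ^ m * h z)"
  using assms
proof (induction m arbitrary: g)
  case 0
  then show ?case
    by auto
next
  case (Suc m)
  obtain h1 where h1: "h1 holomorphic_on ball 0 1" "\<And>z. norm z < 1 \<Longrightarrow> g z = z * h1 z"
    using Schwarz3[OF Suc.prems(1)] Suc.prems(2)[of 0] by auto
  have "(deriv ^^ k) h1 0 = 0" if "k < m" for k
  proof -
    have "(deriv ^^ Suc k) g 0 = (deriv ^^ Suc k) (\<lambda>z. z * h1 z) 0"
      by (rule higher_deriv_cong_ball[of 1]) (auto simp: h1(2))
    also have "\<dots> = (\<Sum>i = 0..Suc k. of_nat (Suc k choose i) * (deriv ^^ i) (\<lambda>z. z) 0 *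
        (deriv ^^ (Suc k - i)) h1 0)"
      by (rule higher_deriv_mult[OF _ h1(1)]) (auto intro: holomorphic_intros)
    also have "\<dots> = (\<Sum>i \<in> {1}. of_nat (Suc k choose i) * (deriv ^^ i) (\<lambda>z. z) 0 *
        (deriv ^^ (Suc k - i)) h1 0)"
      by (intro sum.mono_neutral_right) auto
    also have "\<dots> = of_nat (Suc k) * (deriv ^^ k) h1 0"
      by simp
    finally show ?thesis
      using Suc.prems(2)[of "Suc k"] that by (simp del: of_nat_Suc)
  qed
  then obtain h where "h holomorphic_on ball 0 1" "\<forall>z\<in>ball 0 1. h1 z = z ^ m * h z"
    using Suc.IH[OF h1(1)] by blast
  then show ?case
    using h1(2) by (intro exI[of _ h]) auto
qed

section \<open>\<open>Qf\<close> and Cayley transforms\<close>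

lemma Qf_mult_self:
  assumes "p holomorphic_on S" "open S" "z \<in> S" "\<And>u. u \<in> S \<Longrightarrow> f u = u * p u"
    and "z \<noteq> 0" "p z \<noteq> 0"
  shows "Qf f z = 1 + z * deriv p z / p z"
proof -
  have "eventually (\<lambda>u. f u = u * p u) (nhds z)"
    using eventually_nhds_in_open[OF assms(2,3)] by eventually_elim (rule assms(4))
  then have "deriv f z = deriv (\<lambda>u. u * p u) z"
    by (rule deriv_cong_ev) simp
  also have "\<dots> = p z + z * deriv p z"
    using assms(1-3) by (simp add: holomorphic_on_imp_differentiable_at)
  finally show ?thesis
    using assms(3-6) by (simp add: Qf_def field_simps)
qed

lemma deriv_Cayley_div:
  fixes \<omega> :: "complex \<Rightarrow> complex"
  assumes "(\<omega> has_field_derivative \<omega>') (at z)" "\<omega> z \<noteq> 1" "\<omega> z \<noteq> -1"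
    and "eventually (\<lambda>u. p u = (1 + \<omega> u) / (1 - \<omega> u)) (nhds z)"
  shows "deriv p z / p z = 2 * \<omega>' / (1 - \<omega> z ^ 2)"
proof -
  have "1 - \<omega> z \<noteq> 0" "1 + \<omega> z \<noteq> 0"
    using assms(2,3) by (auto simp: add_eq_0_iff)
  have "((\<lambda>u. (1 + \<omega> u) / (1 - \<omega> u)) has_field_derivative 2 * \<omega>' / (1 - \<omega> z) ^ 2) (at z)"
    using assms(1) \<open>1 - \<omega> z \<noteq> 0\<close>
    by (auto intro!: derivative_eq_intros simp: field_simps power2_eq_square)
  then have "deriv p z = 2 * \<omega>' / (1 - \<omega> z) ^ 2"
    by (metis DERIV_imp_deriv assms(4) deriv_cong_ev)
  moreover have "p z = (1 + \<omega> z) / (1 - \<omega> z)"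
    using assms(4) by (rule eventually_nhds_x_imp_x)
  moreover have "1 - \<omega> z ^ 2 = (1 - \<omega> z) * (1 + \<omega> z)"
    by (simp add: power2_eq_square algebra_simps)
  ultimately show ?thesis
    using \<open>1 - \<omega> z \<noteq> 0\<close> \<open>1 + \<omega> z \<noteq> 0\<close> by (simp add: power2_eq_square)
qed

lemma one_minus_power_nonzero:
  fixes z :: complex
  assumes "norm z < 1" "n \<ge> 1"
  shows "1 - z ^ n \<noteq> 0"
proof -
  have "norm (z ^ n) < 1"
    using assms by (simp add: norm_power power_less_one_iff)
  then show ?thesis
    by auto
qed

lemma Re_Cayley_pos:
  fixes u :: complex
  assumes "norm u < 1"
  shows "Re ((1 + u) / (1 - u)) > 0"
proof -
  have "Re ((1 + u) / (1 - u)) = (1 - norm u ^ 2) / norm (1 - u) ^ 2"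
    by (cases u) (simp add: Re_divide cmod_power2 algebra_simps, simp add: power2_eq_square)
  moreover have "1 - norm u ^ 2 > 0"
    using assms by (simp add: power_less_one_iff abs_less_iff)
  moreover have "1 - u \<noteq> 0"
    using assms by auto
  ultimately show ?thesis
    by simp
qed

lemma norm_diff_one_less_norm_add_one:
  fixes q :: complex
  assumes "Re q > 0"
  shows "norm (q - 1) < norm (q + 1)"
proof -
  have "norm (q - 1) ^ 2 < norm (q + 1) ^ 2"
    unfolding cmod_power2 using assms by (simp add: power2_eq_square algebra_simps)
  then show ?thesis
    by (rule power2_less_imp_less) simp
qed

section \<open>The extremal function\<close>

definition extremal_W :: "nat \<Rightarrow> complex \<Rightarrow> complex" where
  "extremal_W n = (\<lambda>z. z * (1 + z ^ n) / (1 - z ^ n))"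

lemma extremal_W_in_W_class:
  assumes n: "n \<ge> 1"
  shows "extremal_W n \<in> W_class n"
proof -
  define B where "B = ball (0::complex) 1"
  have B: "open B" "0 \<in> B"
    by (auto simp: B_def)
  have nz: "1 - z ^ n \<noteq> 0" if "z \<in> B" for z
    using one_minus_power_nonzero n that by (auto simp: B_def)
  define h where "h = (\<lambda>z::complex. 2 / (1 - z ^ n))"
  have hhol: "h holomorphic_on B"
    unfolding h_def using nz by (intro holomorphic_intros) auto
  define p where "p = (\<lambda>z::complex. (1 + z ^ n) / (1 - z ^ n))"
  have phol: "p holomorphic_on B"
    unfolding p_def using nz by (intro holomorphic_intros) auto
  \<comment> \<open>Both expansions exhibit the vanishing Taylor coefficients.\<close>
  have f_eq: "extremal_W n z = z + z ^ (n + 1) * h z" and p_eq: "p z = 1 + z ^ n * h z"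
    if "z \<in> B" for z
    using nz[OF that] by (simp_all add: extremal_W_def p_def h_def field_simps)
  have "(deriv ^^ k) (extremal_W n) 0 = (deriv ^^ k) (\<lambda>z. z) 0" if "k \<le> n" for k
  proof -
    have "(deriv ^^ k) (extremal_W n) 0 = (deriv ^^ k) (\<lambda>z. z + z ^ (n + 1) * h z) 0"
      by (rule higher_deriv_cong_ball[of 1]) (auto simp: f_eq B_def)
    also have "\<dots> = (deriv ^^ k) (\<lambda>z. z) 0"
      using that by (intro higher_deriv_add_power_mult[OF _ hhol B]) auto
    finally show ?thesis .
  qed
  then have "extremal_W n \<in> A_class n"
    unfolding A_class_def using n nz
    by (force simp: extremal_W_def B_def intro!: holomorphic_intros)
  moreover have "(deriv ^^ k) p 0 = 0" if "1 \<le> k" "k < n" for k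
  proof -
    have "(deriv ^^ k) p 0 = (deriv ^^ k) (\<lambda>z. 1 + z ^ n * h z) 0"
      by (rule higher_deriv_cong_ball[of 1]) (auto simp: p_eq B_def)
    also have "\<dots> = (deriv ^^ k) (\<lambda>z. 1) 0"
      using that by (intro higher_deriv_add_power_mult[OF _ hhol B]) auto
    finally show ?thesis
      using that by simp
  qed
  moreover have "Re (p z) > 0" if "z \<in> B" for z
    unfolding p_def using that n
    by (intro Re_Cayley_pos) (simp add: B_def norm_power power_less_one_iff)
  ultimately have "p \<in> P_class n"
    unfolding P_class_def using phol n by (auto simp: B_def p_def power_0_left)
  then show ?thesis
    unfolding W_class_def using \<open>extremal_W n \<in> A_class n\<close>
    by (auto simp: p_def extremal_W_def intro!: bexI[of _ p])
qed

lemma Qf_extremal_W: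
  assumes n: "n \<ge> 1" and z: "norm z < 1" "z \<noteq> 0" "1 + z ^ n \<noteq> 0"
  shows "Qf (extremal_W n) z = 1 + 2 * of_nat n * z ^ n / (1 - z ^ (2 * n))"
proof -
  define p where "p = (\<lambda>u::complex. (1 + u ^ n) / (1 - u ^ n))"
  have nz: "1 - u ^ n \<noteq> 0" if "u \<in> ball 0 1" for u :: complex
    using one_minus_power_nonzero[of u n] n that by auto
  have "p holomorphic_on ball 0 1"
    unfolding p_def using nz by (intro holomorphic_intros) auto
  moreover have "p z \<noteq> 0"
    using z nz[of z] by (simp add: p_def)
  ultimately have "Qf (extremal_W n) z = 1 + z * (deriv p z / p z)"
    using z by (subst Qf_mult_self[of p "ball 0 1"]) (auto simp: extremal_W_def p_def)
  also have "deriv p z / p z = 2 * (of_nat n * z ^ (n - 1)) / (1 - (z ^ n) ^ 2)"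
    using nz[of z] z
    by (intro deriv_Cayley_div[of "\<lambda>u. u ^ n"]) (auto intro!: derivative_eq_intros simp: p_def add_eq_0_iff)
  also have "z * (2 * (of_nat n * z ^ (n - 1)) / (1 - (z ^ n) ^ 2)) =
      2 * of_nat n * z ^ n / (1 - z ^ (2 * n))"
    using n by (simp add: power_mult mult.commute[of 2 n] power_eq_if[of z n])
  finally show ?thesis .
qed

lemma power_ray_pi_div:
  assumes "n \<ge> 1"
  shows "(complex_of_real t * exp (\<i> * of_real (pi / n))) ^ n = - complex_of_real (t ^ n)"
proof -
  have "exp (\<i> * of_real (pi / n)) ^ n = exp (of_nat n * (\<i> * of_real (pi / n)))"
    by (rule exp_of_nat_mult[symmetric])
  also have "of_nat n * (\<i> * of_real (pi / n)) = \<i> * of_real pi"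
    using assms by (simp add: field_simps)
  finally show ?thesis
    by (simp add: power_mult_distrib)
qed

lemma Qf_extremal_W_ray:
  assumes n: "n \<ge> 1" and t: "0 < t" "t < 1"
  shows "Qf (extremal_W n) (complex_of_real t * exp (\<i> * of_real (pi / n))) =
         complex_of_real (1 - 2 * real n * t ^ n / (1 - (t ^ n) ^ 2))"
proof -
  define z where "z = complex_of_real t * exp (\<i> * of_real (pi / n))"
  have nz: "norm z = t"
    using t by (simp add: z_def norm_mult)
  have zn: "z ^ n = - complex_of_real (t ^ n)"
    unfolding z_def by (rule power_ray_pi_div[OF n])
  have "t ^ n < 1"
    using t n by (simp add: power_less_one_iff)
  then have "1 + z ^ n \<noteq> 0"
    by (simp add: zn add_eq_0_iff flip: of_real_power)
  then have "Qf (extremal_W n) z = 1 + 2 * of_nat n * z ^ n / (1 - z ^ (2 * n))"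
    using nz t by (intro Qf_extremal_W[OF n]) auto
  also have "\<dots> = complex_of_real (1 - 2 * real n * t ^ n / (1 - (t ^ n) ^ 2))"
    by (simp add: zn power_mult mult.commute[of 2 n])
  finally show ?thesis
    by (simp add: z_def)
qed

section \<open>The Schwarz--Pick lemma\<close>

lemma Moebius_function_0_has_field_derivative:
  assumes "1 - cnj w * z \<noteq> 0"
  shows "(Moebius_function 0 w has_field_derivative (1 - cnj w * w) / (1 - cnj w * z) ^ 2) (at z)"
proof -
  have "Moebius_function 0 w = (\<lambda>z. (z - w) / (1 - cnj w * z))"
    by (simp add: Moebius_function_simple fun_eq_iff)
  then show ?thesis
    using assms by (auto intro!: derivative_eq_intros simp: field_simps power2_eq_square)
qed

lemma Schwarz_Pick_strict:
  fixes F :: "complex \<Rightarrow> complex"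
  assumes hol: "F holomorphic_on ball 0 1" and F1: "\<And>z. norm z < 1 \<Longrightarrow> norm (F z) < 1"
    and a: "norm a < 1"
  shows "norm (deriv F a) * (1 - norm a ^ 2) \<le> 1 - norm (F a) ^ 2"
proof -
  define b where "b = F a"
  have b: "norm b < 1"
    using F1 a by (simp add: b_def)
  define T where "T = Moebius_function 0 (-a)"
  define M where "M = Moebius_function 0 b"
  define \<psi> where "\<psi> = M \<circ> (F \<circ> T)"
  have T: "T holomorphic_on ball 0 1" "T ` ball 0 1 \<subseteq> ball 0 1" "T 0 = a"
    using a Moebius_function_norm_lt_1[of "-a"]
    by (auto simp: T_def Moebius_function_holomorphic Moebius_function_of_zero)
  have FT: "(F \<circ> T) holomorphic_on ball 0 1" "(F \<circ> T) ` ball 0 1 \<subseteq> ball 0 1"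
    using holomorphic_on_compose_gen[OF T(1) hol T(2)] T(2) F1 by auto
  have "\<psi> holomorphic_on ball 0 1"
    using holomorphic_on_compose_gen[OF FT(1) Moebius_function_holomorphic[OF b] FT(2)]
    by (simp add: \<psi>_def M_def)
  moreover have "\<psi> 0 = 0"
    by (simp add: \<psi>_def T(3) M_def b_def Moebius_function_eq_zero)
  moreover have "norm (\<psi> z) < 1" if "norm z < 1" for z
  proof -
    have "norm (T z) < 1"
      using T(2) that by (auto simp: image_subset_iff)
    then show ?thesis
      using b F1 by (simp add: \<psi>_def M_def Moebius_function_norm_lt_1)
  qed
  ultimately have Schwarz: "norm (deriv \<psi> 0) \<le> 1"
    using Schwarz_Lemma(2)[of \<psi> 0] by simp
  define \<alpha> where "\<alpha> = 1 - norm a ^ 2"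
  define \<beta> where "\<beta> = 1 - norm b ^ 2"
  have \<alpha>\<beta>: "0 < \<alpha>" "0 < \<beta>"
    using a b by (auto simp: \<alpha>_def \<beta>_def power_less_one_iff)
  have cnj_mult: "1 - cnj w * w = of_real (1 - norm w ^ 2)" for w :: complex
    using complex_norm_square[of w] by (simp add: mult.commute)
  have dT: "(T has_field_derivative of_real \<alpha>) (at 0)"
    using Moebius_function_0_has_field_derivative[of "-a" 0] by (simp add: T_def cnj_mult \<alpha>_def)
  have dF: "(F has_field_derivative deriv F a) (at (T 0))"
    using hol a T(3) by (auto intro: holomorphic_derivI)
  have dM: "(M has_field_derivative of_real (1 / \<beta>)) (at (F (T 0)))"
  proof -
    have "1 - cnj b * b = of_real \<beta>"
      by (simp add: cnj_mult \<beta>_def)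
    moreover have "of_real \<beta> / (of_real \<beta>) ^ 2 = (of_real (1 / \<beta>) :: complex)"
      using \<alpha>\<beta> by (simp add: power2_eq_square)
    ultimately show ?thesis
      using Moebius_function_0_has_field_derivative[of b b] \<alpha>\<beta> by (simp add: M_def T(3) b_def)
  qed
  have "(\<psi> has_field_derivative of_real (1 / \<beta>) * (deriv F a * of_real \<alpha>)) (at 0)"
    unfolding \<psi>_def comp_def by (rule DERIV_chain2[OF dM DERIV_chain2[OF dF dT]])
  then have "norm (deriv \<psi> 0) = norm (deriv F a) * \<alpha> / \<beta>"
    using \<alpha>\<beta> by (simp add: DERIV_imp_deriv norm_mult norm_divide)
  then show ?thesis
    using Schwarz \<alpha>\<beta> by (simp add: b_def \<alpha>_def \<beta>_def divide_le_eq)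
qed

lemma Schwarz_Pick:
  fixes \<phi> :: "complex \<Rightarrow> complex"
  assumes hol: "\<phi> holomorphic_on ball 0 1" and le: "\<And>z. norm z < 1 \<Longrightarrow> norm (\<phi> z) \<le> 1"
    and a: "norm a < 1"
  shows "norm (deriv \<phi> a) * (1 - norm a ^ 2) \<le> 1 - norm (\<phi> a) ^ 2"
proof (cases "\<exists>z0. norm z0 < 1 \<and> norm (\<phi> z0) = 1")
  case True
  then obtain z0 where z0: "norm z0 < 1" "norm (\<phi> z0) = 1"
    by blast
  have "\<phi> constant_on ball 0 1"
    by (rule maximum_modulus_principle[OF hol, of "ball 0 1" z0]) (use z0 le in auto)
  then obtain c where c: "\<And>z. z \<in> ball 0 1 \<Longrightarrow> \<phi> z = c"
    by (auto simp: constant_on_def)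
  have "eventually (\<lambda>z. z \<in> ball 0 1) (nhds a)"
    using a by (intro eventually_nhds_in_open) auto
  then have "eventually (\<lambda>z. \<phi> z = c) (nhds a)"
    by eventually_elim (rule c)
  then have "deriv \<phi> a = 0"
    by (simp add: deriv_cong_ev[of _ "\<lambda>_. c"])
  moreover have "norm (\<phi> a) = 1"
    using c z0 a by force
  ultimately show ?thesis
    by simp
next
  case False
  then have "\<And>z. norm z < 1 \<Longrightarrow> norm (\<phi> z) < 1"
    using le by (meson le_less)
  then show ?thesis
    by (rule Schwarz_Pick_strict[OF hol _ a])
qed

lemma Schwarz_power:
  fixes \<phi> :: "complex \<Rightarrow> complex"
  assumes hol: "\<phi> holomorphic_on ball 0 1" and n: "n \<ge> 1"
    and lt: "\<And>z. norm z < 1 \<Longrightarrow> norm (z ^ n * \<phi> z) < 1"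
    and z: "norm z < 1"
  shows "norm (\<phi> z) \<le> 1"
proof (rule ccontr)
  assume "\<not> norm (\<phi> z) \<le> 1"
  then have big: "norm (\<phi> z) > 1" "\<phi> z \<noteq> 0"
    by auto
  \<comment> \<open>Maximum modulus on a circle of radius \<open>r\<close> with \<open>r ^ n * norm (\<phi> z) > 1\<close>.\<close>
  define r0 where "r0 = root n (1 / norm (\<phi> z))"
  have r0: "0 \<le> r0" "r0 < 1" "r0 ^ n = 1 / norm (\<phi> z)"
    using big n by (auto simp: r0_def divide_less_eq real_root_pow_pos2)
  define r where "r = (max (norm z) r0 + 1) / 2"
  have r: "norm z < r" "r0 < r" "r < 1" "0 < r"
    using r0 z by (auto simp: r_def)
  have "r0 ^ n < r ^ n"
    using r r0 n by (intro power_strict_mono) auto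
  then have "r0 ^ n * norm (\<phi> z) < r ^ n * norm (\<phi> z)"
    using big by (intro mult_strict_right_mono) auto
  moreover have "r0 ^ n * norm (\<phi> z) = 1"
    using r0(3) big by simp
  ultimately have "1 < r ^ n * norm (\<phi> z)"
    by simp
  have "\<phi> holomorphic_on ball 0 r" "continuous_on (closure (ball 0 r)) \<phi>"
    using r by (auto intro!: holomorphic_on_imp_continuous_on holomorphic_on_subset[OF hol])
  then obtain w where w: "w \<in> frontier (ball 0 r)"
    and wmax: "\<And>y. y \<in> closure (ball 0 r) \<Longrightarrow> norm (\<phi> y) \<le> norm (\<phi> w)"
    using Schwarz1 r(4) by (metis bounded_ball connected_ball open_ball ball_eq_empty not_less)
  have "norm w = r"
    using w r by (simp add: frontier_ball)
  then have "r ^ n * norm (\<phi> w) < 1"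
    using lt[of w] r by (simp add: norm_mult norm_power)
  moreover have "norm (\<phi> z) \<le> norm (\<phi> w)"
    using wmax r by simp
  ultimately show False
    using \<open>1 < r ^ n * norm (\<phi> z)\<close> r by (smt (verit) mult_left_mono zero_le_power)
qed

section \<open>The sharp bound on \<open>z p'/p\<close> for \<open>p \<in> P_n\<close>\<close>

lemma power_add_power_le:
  fixes r :: real
  assumes "0 \<le> r" "r \<le> 1"
  shows "r ^ i + r ^ j \<le> 1 + r ^ (i + j)"
proof -
  have "0 \<le> (1 - r ^ i) * (1 - r ^ j)"
    using assms by (intro mult_nonneg_nonneg) (auto simp: power_le_one)
  then show ?thesis
    by (simp add: power_add algebra_simps)
qed

lemma odd_power_sum_le:
  fixes r t :: real
  assumes r: "0 \<le> r" "r \<le> 1" and t: "0 \<le> t" "t \<le> 1"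
  shows "r * (1 + t) * (\<Sum>k<n. (r ^ 2) ^ k) \<le> n * (1 + r ^ (2 * n) * t)"
proof -
  define S where "S = (\<Sum>k<n. r ^ (2 * k + 1))"
  have S: "r * (\<Sum>k<n. (r ^ 2) ^ k) = S"
    by (simp add: S_def sum_distrib_left power_mult)
  have "S \<le> (\<Sum>k<n. 1)"
    unfolding S_def using r by (intro sum_mono power_le_one) auto
  then have S1: "S \<le> n"
    by simp
  \<comment> \<open>Pair the term for \<open>k\<close> with the one for \<open>n - 1 - k\<close>.\<close>
  have "2 * S = (\<Sum>k<n. r ^ (2 * k + 1) + r ^ (2 * (n - Suc k) + 1))"
    unfolding S_def sum.distrib using sum.nat_diff_reindex[of "\<lambda>k. r ^ (2 * k + 1)" n] by simp
  also have "\<dots> \<le> (\<Sum>k<n. 1 + r ^ (2 * n))"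
  proof (intro sum_mono)
    fix k
    assume "k \<in> {..<n}"
    then have "(2 * k + 1) + (2 * (n - Suc k) + 1) = 2 * n"
      by auto
    then show "r ^ (2 * k + 1) + r ^ (2 * (n - Suc k) + 1) \<le> 1 + r ^ (2 * n)"
      using power_add_power_le[OF r, of "2 * k + 1" "2 * (n - Suc k) + 1"] by simp
  qed
  finally have S2: "2 * S \<le> n * (1 + r ^ (2 * n))"
    by simp
  have "r * (1 + t) * (\<Sum>k<n. (r ^ 2) ^ k) = (1 - t) * S + t * (2 * S)"
    using S by (simp add: algebra_simps)
  also have "\<dots> \<le> (1 - t) * n + t * (n * (1 + r ^ (2 * n)))"
    using t S1 S2 by (intro add_mono mult_left_mono) auto
  finally show ?thesis
    by (simp add: algebra_simps)
qed

text \<open>Equality holds for \<open>t = 1\<close>, \<open>s = 0\<close>, i.e. when the Schwarz--Pick function is a unimodular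
  constant, as for the extremal function.\<close>

lemma Schwarz_Pick_power_ineq:
  fixes r t s :: real
  assumes n: "n \<ge> 1" and r: "0 < r" "r < 1" and t: "0 \<le> t" "t \<le> 1"
    and Pick: "s * (1 - r ^ 2) \<le> 1 - t ^ 2"
  shows "(n * r ^ n * t + r ^ (n + 1) * s) / (1 - r ^ (2 * n) * t ^ 2) \<le> n * r ^ n / (1 - r ^ (2 * n))"
proof -
  define A where "A = r ^ (2 * n)"
  define S where "S = (\<Sum>k<n. (r ^ 2) ^ k)"
  have A: "0 < A" "A < 1"
    using r n by (auto simp: A_def power_less_one_iff)
  have geometric: "1 - A = (1 - r ^ 2) * S"
    unfolding A_def S_def power_mult by (rule one_diff_power_eq)
  have "A * t ^ 2 \<le> A"
    using A t by (simp add: mult_left_le power_le_one)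
  then have den: "0 < 1 - A * t ^ 2" "0 < 1 - A"
    using A by linarith+
  have "s * (1 - A) \<le> (1 - t ^ 2) * S"
    unfolding geometric using Pick by (simp add: S_def mult.assoc[symmetric] mult_right_mono sum_nonneg)
  then have "r * (s * (1 - A)) \<le> r * ((1 - t ^ 2) * S)"
    using r by (simp add: mult_left_mono)
  also have "\<dots> = (1 - t) * (r * (1 + t) * S)"
    by (simp add: power2_eq_square algebra_simps)
  also have "\<dots> \<le> (1 - t) * (n * (1 + A * t))"
    using t r by (intro mult_left_mono) (auto simp: S_def A_def odd_power_sum_le)
  finally have "(n * t + r * s) * (1 - A) \<le> n * (1 - A * t ^ 2)"
    by (simp add: algebra_simps power2_eq_square)
  then have "(n * t + r * s) / (1 - A * t ^ 2) \<le> n / (1 - A)"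
    using den by (simp add: divide_simps)
  then have "r ^ n * ((n * t + r * s) / (1 - A * t ^ 2)) \<le> r ^ n * (n / (1 - A))"
    using r by (intro mult_left_mono) auto
  then show ?thesis
    by (simp add: A_def algebra_simps)
qed

lemma P_class_Cayley_form:
  assumes n: "n \<ge> 1" and p: "p \<in> P_class n"
  obtains \<phi> where "\<phi> holomorphic_on ball 0 1" "\<And>u. norm u < 1 \<Longrightarrow> norm (\<phi> u) \<le> 1"
    "\<And>u. norm u < 1 \<Longrightarrow> norm (u ^ n * \<phi> u) < 1"
    "\<And>u. norm u < 1 \<Longrightarrow> p u = (1 + u ^ n * \<phi> u) / (1 - u ^ n * \<phi> u)"
proof -
  have phol: "p holomorphic_on ball 0 1" and re: "\<And>u. norm u < 1 \<Longrightarrow> Re (p u) > 0"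
    using p unfolding P_class_def by auto
  have "(deriv ^^ k) (\<lambda>u. p u - 1) 0 = 0" if "k < n" for k
  proof (cases "k = 0")
    case True
    then show ?thesis
      using p by (simp add: P_class_def)
  next
    case False
    have "(deriv ^^ k) (\<lambda>u. p u - 1) 0 = (deriv ^^ k) p 0 - (deriv ^^ k) (\<lambda>u. 1) 0"
      by (rule higher_deriv_diff[OF phol]) auto
    then show ?thesis
      using False p that by (simp add: P_class_def)
  qed
  moreover have "(\<lambda>u. p u - 1) holomorphic_on ball 0 1"
    using phol by (intro holomorphic_intros)
  ultimately obtain h where hhol: "h holomorphic_on ball 0 1"
    and h: "\<And>u. u \<in> ball 0 1 \<Longrightarrow> p u - 1 = u ^ n * h u"
    using holomorphic_factor_power by blast
  have nz: "p u + 1 \<noteq> 0" if "norm u < 1" for u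
  proof
    assume "p u + 1 = 0"
    then have "p u = -1"
      by (simp add: eq_neg_iff_add_eq_0)
    then show False
      using re[OF that] by simp
  qed
  define \<phi> where "\<phi> = (\<lambda>u. h u / (p u + 1))"
  have \<omega>: "u ^ n * \<phi> u = (p u - 1) / (p u + 1)" if "norm u < 1" for u
    using h[of u] that by (simp add: \<phi>_def)
  have \<omega>1: "norm (u ^ n * \<phi> u) < 1" if "norm u < 1" for u
    using norm_diff_one_less_norm_add_one[OF re[OF that]] nz[OF that]
    by (simp add: \<omega>[OF that] norm_divide divide_less_eq)
  show ?thesis
  proof
    show \<phi>hol: "\<phi> holomorphic_on ball 0 1"
      unfolding \<phi>_def using hhol phol nz by (intro holomorphic_intros) auto
    show "norm (\<phi> u) \<le> 1" if "norm u < 1" for u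
      by (rule Schwarz_power[OF \<phi>hol n \<omega>1 that])
    show "norm (u ^ n * \<phi> u) < 1" if "norm u < 1" for u
      using \<omega>1[OF that] .
    show "p u = (1 + u ^ n * \<phi> u) / (1 - u ^ n * \<phi> u)" if "norm u < 1" for u
      using nz[OF that] by (simp add: \<omega>[OF that] divide_simps)
  qed
qed

text \<open>With \<open>v = \<phi> z\<close> and \<open>d = deriv \<phi> z\<close> for the function \<open>\<phi>\<close> of \<open>P_class_Cayley_form\<close>,
  the left-hand side is \<open>norm (z * deriv p z / p z)\<close>.\<close>

lemma Cayley_power_logderiv_bound:
  fixes z v d :: complex
  assumes n: "n \<ge> 1" and z: "z \<noteq> 0" "norm z < 1" and v: "norm v \<le> 1"
    and Pick: "norm d * (1 - norm z ^ 2) \<le> 1 - norm v ^ 2" and lt: "norm (z ^ n * v) < 1"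
  shows "norm (2 * (of_nat n * z ^ n * v + z * z ^ n * d) / (1 - (z ^ n * v) ^ 2))
           \<le> 2 * real n * norm z ^ n / (1 - norm z ^ (2 * n))"
proof -
  define r where "r = norm z"
  have r: "0 < r" "r < 1"
    using z by (auto simp: r_def)
  have r2n: "r ^ (2 * n) * norm v ^ 2 = norm (z ^ n * v) ^ 2"
    by (simp add: r_def norm_mult norm_power power_mult_distrib power_mult mult.commute[of 2 n])
  then have den: "0 < 1 - r ^ (2 * n) * norm v ^ 2" "1 - r ^ (2 * n) * norm v ^ 2 \<le> norm (1 - (z ^ n * v) ^ 2)"
    using lt norm_triangle_ineq2[of 1 "(z ^ n * v) ^ 2"] by (auto simp: power_less_one_iff norm_power)
  have num: "norm (of_nat n * z ^ n * v + z * z ^ n * d) \<le> n * r ^ n * norm v + r ^ (n + 1) * norm d"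
    using norm_triangle_ineq[of "of_nat n * z ^ n * v" "z * z ^ n * d"]
    by (simp add: r_def norm_mult norm_power)
  have "norm (2 * (of_nat n * z ^ n * v + z * z ^ n * d) / (1 - (z ^ n * v) ^ 2))
      = 2 * norm (of_nat n * z ^ n * v + z * z ^ n * d) / norm (1 - (z ^ n * v) ^ 2)"
    by (simp only: norm_divide norm_mult norm_numeral)
  also have "\<dots> \<le> 2 * (n * r ^ n * norm v + r ^ (n + 1) * norm d) / (1 - r ^ (2 * n) * norm v ^ 2)"
  proof (rule frac_le)
    show "0 \<le> 2 * (n * r ^ n * norm v + r ^ (n + 1) * norm d)"
      using r by simp
  qed (use num den in auto)
  also have "\<dots> = 2 * ((n * r ^ n * norm v + r ^ (n + 1) * norm d) / (1 - r ^ (2 * n) * norm v ^ 2))"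
    by simp
  also have "\<dots> \<le> 2 * (n * r ^ n / (1 - r ^ (2 * n)))"
    by (rule mult_left_mono[OF Schwarz_Pick_power_ineq[OF n r norm_ge_zero v Pick[folded r_def]]])
      simp
  finally show ?thesis
    by (simp add: r_def)
qed

lemma P_class_logderiv_bound:
  assumes n: "n \<ge> 1" and p: "p \<in> P_class n" and z: "norm z < 1" "z \<noteq> 0"
  shows "norm (z * deriv p z / p z) \<le> 2 * real n * norm z ^ n / (1 - norm z ^ (2 * n))"
proof -
  obtain \<phi> where \<phi>hol: "\<phi> holomorphic_on ball 0 1" and \<phi>1: "\<And>u. norm u < 1 \<Longrightarrow> norm (\<phi> u) \<le> 1"
    and \<omega>1: "\<And>u. norm u < 1 \<Longrightarrow> norm (u ^ n * \<phi> u) < 1"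
    and p_eq: "\<And>u. norm u < 1 \<Longrightarrow> p u = (1 + u ^ n * \<phi> u) / (1 - u ^ n * \<phi> u)"
    using P_class_Cayley_form[OF n p] by blast
  define \<omega>' where "\<omega>' = of_nat n * z ^ (n - 1) * \<phi> z + z ^ n * deriv \<phi> z"
  have "((\<lambda>u. u ^ n * \<phi> u) has_field_derivative \<omega>') (at z)"
    unfolding \<omega>'_def using \<phi>hol z by (auto intro!: derivative_eq_intros holomorphic_derivI)
  moreover have "eventually (\<lambda>u. u \<in> ball 0 1) (nhds z)"
    using z by (intro eventually_nhds_in_open) auto
  then have "eventually (\<lambda>u. p u = (1 + u ^ n * \<phi> u) / (1 - u ^ n * \<phi> u)) (nhds z)"
    by eventually_elim (simp add: p_eq)
  moreover have "z ^ n * \<phi> z \<noteq> 1" "z ^ n * \<phi> z \<noteq> -1"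
    using \<omega>1[OF z(1)] by auto
  ultimately have "deriv p z / p z = 2 * \<omega>' / (1 - (z ^ n * \<phi> z) ^ 2)"
    by (intro deriv_Cayley_div) auto
  moreover have "z * \<omega>' = of_nat n * z ^ n * \<phi> z + z * z ^ n * deriv \<phi> z"
    using n power_minus_mult[of n z] by (simp add: \<omega>'_def algebra_simps)
  ultimately have eq: "z * deriv p z / p z =
      2 * (of_nat n * z ^ n * \<phi> z + z * z ^ n * deriv \<phi> z) / (1 - (z ^ n * \<phi> z) ^ 2)"
    by (metis times_divide_eq_right mult.left_commute)
  have "norm (deriv \<phi> z) * (1 - norm z ^ 2) \<le> 1 - norm (\<phi> z) ^ 2"
    using Schwarz_Pick[of \<phi> z] \<phi>hol \<phi>1 z by blast
  then show ?thesis
    unfolding eq using z \<phi>1[OF z(1)] \<omega>1[OF z(1)] by (intro Cayley_power_logderiv_bound[OF n])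
qed

lemma Qf_W_class_bound:
  assumes n: "n \<ge> 1" and f: "f \<in> W_class n" and z: "norm z < 1"
  shows "norm (Qf f z - 1) \<le> 2 * real n * norm z ^ n / (1 - norm z ^ (2 * n))"
proof (cases "z = 0")
  case True
  then show ?thesis
    using n by (simp add: Qf_def power_0_left)
next
  case False
  obtain p where p: "p \<in> P_class n" and f_eq: "\<And>u. u \<in> ball 0 1 \<Longrightarrow> f u = u * p u"
    using f unfolding W_class_def by auto
  have "p holomorphic_on ball 0 1" "Re (p z) > 0"
    using p z unfolding P_class_def by auto
  then have "Qf f z = 1 + z * deriv p z / p z"
    using z False by (intro Qf_mult_self[OF _ _ _ f_eq]) auto
  then show ?thesis
    using P_class_logderiv_bound[OF n p z False] by simp
qed

section \<open>The radius\<close>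

lemma quadratic_root_facts:
  fixes n :: nat and a :: real
  defines "a \<equiv> 2 / (3 * real n + sqrt (9 * (real n)^2 + 4))"
  assumes n: "n \<ge> 1"
  shows "0 < a" "a < 1" "a^2 + 3 * real n * a = 1"
proof -
  define D where "D = 3 * real n + sqrt (9 * (real n)^2 + 4)"
  have "sqrt 4 \<le> sqrt (9 * (real n)^2 + 4)"
    by (intro real_sqrt_le_mono) simp
  then have D: "D > 2"
    using n by (simp add: D_def)
  then show "0 < a" "a < 1"
    by (simp_all add: a_def D_def[symmetric])
  \<comment> \<open>\<open>a = 2 / D\<close> where \<open>D\<close> is the positive root of \<open>D\<^sup>2 = 4 + 6 n D\<close>.\<close>
  have aD: "a = 2 / D"
    by (simp add: a_def D_def)
  have "a^2 + 3 * real n * a = (4 + 6 * n * D) / D^2"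
    unfolding aD using D by (simp add: power2_eq_square field_simps)
  also have "4 + 6 * n * D = D^2"
    by (simp add: D_def power2_eq_square algebra_simps)
  finally show "a^2 + 3 * real n * a = 1"
    using D by simp
qed

lemma Cayley_ratio_two_thirds_iff:
  fixes n :: nat and a x :: real
  assumes x: "0 \<le> x" "x < 1" and a: "0 < a" "a^2 + 3 * real n * a = 1"
  shows "2 * real n * x / (1 - x^2) < 2/3 \<longleftrightarrow> x < a"
    and "2 * real n * x / (1 - x^2) = 2/3 \<longleftrightarrow> x = a"
proof -
  have den: "0 < 1 - x^2"
    using x by (simp add: power_less_one_iff abs_less_iff)
  have factor: "x^2 + 3 * real n * x - 1 = (x - a) * (x + a + 3 * real n)"
    using a(2) by (simp add: algebra_simps power2_eq_square)
  have pos: "0 < x + a + 3 * real n"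
    using x a(1) of_nat_0_le_iff[of n] by linarith
  have "2 * real n * x / (1 - x^2) < 2/3 \<longleftrightarrow> x^2 + 3 * real n * x - 1 < 0"
    using den by (simp add: divide_simps) arith
  also have "\<dots> \<longleftrightarrow> x < a"
    unfolding factor using pos by (simp add: mult_less_0_iff)
  finally show "2 * real n * x / (1 - x^2) < 2/3 \<longleftrightarrow> x < a" .
  have "2 * real n * x / (1 - x^2) = 2/3 \<longleftrightarrow> x^2 + 3 * real n * x - 1 = 0"
    using den by (simp add: divide_simps) arith
  also have "\<dots> \<longleftrightarrow> x = a"
    unfolding factor using pos by simp
  finally show "2 * real n * x / (1 - x^2) = 2/3 \<longleftrightarrow> x = a" .
qed

lemma Qf_W_class_in_OmegaNe:
  fixes a :: real
  assumes n: "n \<ge> 1" and f: "f \<in> W_class n" and a: "0 < a" "a^2 + 3 * real n * a = 1"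
    and z: "norm z < 1" "norm z ^ n < a"
  shows "Qf f z \<in> OmegaNe"
proof -
  have "norm z ^ n < 1"
    using z n by (simp add: power_less_one_iff)
  then have "2 * real n * norm z ^ n / (1 - (norm z ^ n) ^ 2) < 2/3"
    using Cayley_ratio_two_thirds_iff(1)[OF _ _ a] z by simp
  then have "norm (Qf f z - 1) < 2/3"
    using Qf_W_class_bound[OF n f z(1)] by (simp add: power_mult mult.commute[of 2 n])
  then show ?thesis
    using ball_subset_OmegaNe by (auto simp: dist_norm norm_minus_commute)
qed

lemma Qf_extremal_W_image_not_subset:
  fixes a \<rho> r :: real
  assumes n: "n \<ge> 1" and a: "0 < a" "a^2 + 3 * real n * a = 1"
    and \<rho>: "0 < \<rho>" "a \<le> \<rho> ^ n" and r: "\<rho> < r" "r \<le> 1"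
  shows "\<not> Qf (extremal_W n) ` ball 0 r \<subseteq> OmegaNe"
proof -
  define t where "t = (\<rho> + r) / 2"
  have t: "0 < t" "\<rho> < t" "t < r" "t < 1"
    using \<rho> r by (auto simp: t_def)
  then have "a \<le> t ^ n" "t ^ n < 1"
    using \<rho> n by (auto intro: order_trans power_mono simp: power_less_one_iff)
  then have "2/3 \<le> 2 * real n * t ^ n / (1 - (t ^ n) ^ 2)"
    using Cayley_ratio_two_thirds_iff(1)[OF _ _ a, of "t ^ n"] t by simp
  then have "Qf (extremal_W n) (complex_of_real t * exp (\<i> * of_real (pi / n))) \<notin> OmegaNe"
    unfolding Qf_extremal_W_ray[OF n t(1,4)] by (intro of_real_notin_OmegaNe) simp
  moreover have "complex_of_real t * exp (\<i> * of_real (pi / n)) \<in> ball 0 r"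
    using t by (simp add: norm_mult)
  ultimately show ?thesis
    by blast
qed

lemma Qf_extremal_W_ray_eq_one_third:
  fixes a :: real
  assumes n: "n \<ge> 1" and t: "0 < t" "t < 1" and a: "0 < a" "a^2 + 3 * real n * a = 1" "t ^ n = a"
  shows "Qf (extremal_W n) (complex_of_real t * exp (\<i> * of_real (pi / n))) = complex_of_real (1/3)"
proof -
  have "a < 1"
    using t n a(3) by (auto simp: power_less_one_iff)
  then have "1 - 2 * real n * t ^ n / (1 - (t ^ n) ^ 2) = 1/3"
    using Cayley_ratio_two_thirds_iff(2)[OF _ _ a(1,2), of a] a by simp
  then show ?thesis
    using Qf_extremal_W_ray[OF n t] by metis
qed

lemma radius_SNeI:
  assumes "0 < \<rho>" "\<rho> \<le> 1" "\<And>f. f \<in> G \<Longrightarrow> Qf f ` ball 0 \<rho> \<subseteq> OmegaNe"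
    and "\<And>r. \<rho> < r \<Longrightarrow> r \<le> 1 \<Longrightarrow> \<exists>f\<in>G. \<not> Qf f ` ball 0 r \<subseteq> OmegaNe"
  shows "radius_SNe G \<rho>"
  unfolding radius_SNe_def Let_def using assms by (force simp: not_le[symmetric])

lemma powr_inverse_nat_unit_interval:
  fixes a :: real
  assumes "0 < a" "a < 1" "n \<ge> 1"
  shows "0 < a powr (1 / n)" "a powr (1 / n) < 1" "(a powr (1 / n)) ^ n = a"
proof -
  show "0 < a powr (1 / n)"
    using assms by simp
  show "a powr (1 / n) < 1"
    using assms powr_less_mono2[of "1 / n" a 1] by simp
  show "(a powr (1 / n)) ^ n = a"
    using assms by (simp add: powr_power)
qed

theorem mainTheorem11:
  fixes n :: nat
  assumes "n \<ge> 1"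
  defines "\<rho> \<equiv> (2 / (3 * real n + sqrt (9 * (real n)^2 + 4))) powr (1 / real n)"
  shows "radius_SNe (W_class n) \<rho> \<and>
         (\<lambda>z. z * (1 + z ^ n) / (1 - z ^ n)) \<in> W_class n \<and>
         (\<exists>z. cmod z = \<rho> \<and> Qf (\<lambda>z. z * (1 + z ^ n) / (1 - z ^ n)) z \<in> frontier OmegaNe)"
proof -
  note n = assms(1)
  define a where "a = 2 / (3 * real n + sqrt (9 * (real n)^2 + 4))"
  have a: "0 < a" "a < 1" "a^2 + 3 * real n * a = 1"
    using quadratic_root_facts[OF n] by (simp_all add: a_def)
  have \<rho>: "0 < \<rho>" "\<rho> < 1" "\<rho> ^ n = a"
    unfolding \<rho>_def a_def[symmetric] using powr_inverse_nat_unit_interval[OF a(1,2) n] by auto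
  have "radius_SNe (W_class n) \<rho>"
  proof (rule radius_SNeI)
    show "Qf f ` ball 0 \<rho> \<subseteq> OmegaNe" if "f \<in> W_class n" for f
      using \<rho> power_strict_mono[of _ \<rho> n] n
      by (auto intro!: Qf_W_class_in_OmegaNe[OF n that a(1,3)])
    show "\<exists>f\<in>W_class n. \<not> Qf f ` ball 0 r \<subseteq> OmegaNe" if "\<rho> < r" "r \<le> 1" for r
      using Qf_extremal_W_image_not_subset[OF n a(1,3) \<rho>(1) _ that] \<rho>(3) extremal_W_in_W_class[OF n]
      by auto
  qed (use \<rho> in auto)
  moreover have "norm (complex_of_real \<rho> * exp (\<i> * of_real (pi / n))) = \<rho>"
    using \<rho> by (simp add: norm_mult)
  moreover have "Qf (extremal_W n) (complex_of_real \<rho> * exp (\<i> * of_real (pi / n))) = complex_of_real (1/3)"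
    by (rule Qf_extremal_W_ray_eq_one_third[OF n \<rho>(1,2) a(1,3) \<rho>(3)])
  ultimately show ?thesis
    using extremal_W_in_W_class[OF n] one_third_in_frontier_OmegaNe
    unfolding extremal_W_def by metis
qed

end
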